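(* Let $d\ge1$, $n\ge1$ be integers and let $g$ be a real form of degree $2n$ in $d$ variables with $g(\mathbf{x})\ge0$ for all $\mathbf{x}\in\mathbb{R}^d$ and $g(\mathbf{x})=0$ only if $\mathbf{x}=0$. Let $d\mu=\exp(-g(\mathbf{x}))\,d\mathbf{x}$ on $\mathbb{R}^d$, $c_{2n}:=1+\frac{d}{2n}$, and let $\|q\|_1=\int|q|\,d\mu$ and $\|q\|_2=(\int q^2\,d\mu)^{1/2}$ denote the $L^1(\mu)$- and $L^2(\mu)$-norms. Let $\mathcal{H}_{2n}$ be the space of real forms of degree $2n$ in $d$ variables. Then: (i) the problem $\min_{q\in\mathcal{H}_{2n}}\|q-1\|_2^2$ has a unique minimizer $q^*$, and $g=c_{2n}\,q^*$; (ii) $g$ is a minimizer of $\min_{q\in\mathcal{H}_{2n}}\{\|q\|_2:\ \|q\|_1=\|g\|_1\}$. *)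

theory Defs
  imports "HOL-Analysis.Analysis"
begin

definition monomial :: "('d::finite \<Rightarrow> nat) \<Rightarrow> real^'d \<Rightarrow> real" where
  "monomial \<alpha> x = (\<Prod>i\<in>UNIV. (x $ i) ^ (\<alpha> i))"

text \<open>The space H_m of real forms (homogeneous polynomials) of degree m in d = CARD('d) variables,
  viewed as polynomial functions on R^d.\<close>
definition forms :: "nat \<Rightarrow> (real^'d::finite \<Rightarrow> real) set" where
  "forms m = {q. \<exists>c :: ('d \<Rightarrow> nat) \<Rightarrow> real.
      q = (\<lambda>x. \<Sum>\<alpha>\<in>{\<alpha>. sum \<alpha> UNIV = m}. c \<alpha> * monomial \<alpha> x)}"

definition mu :: "(real^'d::finite \<Rightarrow> real) \<Rightarrow> (real^'d) measure" where
  "mu g = density lborel (\<lambda>x. ennreal (exp (- g x)))"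

definition L1norm :: "(real^'d::finite \<Rightarrow> real) \<Rightarrow> (real^'d \<Rightarrow> real) \<Rightarrow> real" where
  "L1norm g q = integral\<^sup>L (mu g) (\<lambda>x. \<bar>q x\<bar>)"

definition L2norm :: "(real^'d::finite \<Rightarrow> real) \<Rightarrow> (real^'d \<Rightarrow> real) \<Rightarrow> real" where
  "L2norm g q = sqrt (integral\<^sup>L (mu g) (\<lambda>x. (q x)\<^sup>2))"

end

theory Submission
  imports Defs
begin

text \<open>
  Everything rests on a moment identity for \<open>\<mu> = exp (- g) dx\<close>: if \<open>F \<ge> 0\<close> is positively
  homogeneous of degree \<open>m\<close>, then \<open>\<integral> F g d\<mu> = (d + m) / (2 n) \<integral> F d\<mu>\<close>. It follows from
  \<open>exp (- g x) = \<integral>\<^sub>1\<^sup>\<infinity> g x exp (- \<lambda> g x) d\<lambda>\<close>, Fubini, and the substitution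
  \<open>x \<mapsto> \<lambda> powr (- 1 / (2 n)) x\<close>.

  Applied to \<open>r + K g\<close>, which is a nonnegative form for every form \<open>r\<close> and large \<open>K\<close>, it gives
  \<open>\<integral> r (g / c\<^sub>2\<^sub>n - 1) d\<mu> = 0\<close>: so \<open>g / c\<^sub>2\<^sub>n\<close> is the orthogonal projection of \<open>1\<close> onto the
  forms of degree \<open>2 n\<close> in \<open>L\<^sup>2(\<mu>)\<close>, unique because a continuous function vanishing
  \<open>\<mu>\<close>-almost everywhere vanishes. For (ii) write \<open>\<bar>q\<bar> = H g\<close> with \<open>H = \<bar>q\<bar> / g\<close> homogeneous of
  degree \<open>0\<close>; the identity turns \<open>\<parallel>q\<parallel>\<^sub>1\<close> and \<open>\<parallel>q\<parallel>\<^sub>2\<^sup>2\<close> into fixed multiples of \<open>\<integral> H d\<mu>\<close> and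
  \<open>\<integral> H\<^sup>2 d\<mu>\<close>, the case \<open>H = 1\<close> being \<open>g\<close> itself, and \<open>\<integral> H\<^sup>2 d\<mu> \<ge> \<mu>(\<real>\<^sup>d)\<close> as soon as
  \<open>\<integral> H d\<mu> = \<mu>(\<real>\<^sup>d)\<close>.
\<close>

lemma monomial_scaleR: "monomial \<alpha> (t *\<^sub>R x) = t ^ sum \<alpha> UNIV * monomial \<alpha> x"
  unfolding monomial_def by (simp add: power_mult_distrib prod.distrib power_sum)

lemma formsE:
  assumes "q \<in> forms m"
  obtains c where "q = (\<lambda>x. \<Sum>\<alpha>\<in>{\<alpha>. sum \<alpha> UNIV = m}. c \<alpha> * monomial \<alpha> x)"
  using assms unfolding forms_def by blast

lemma forms_homogeneous:
  assumes "q \<in> forms m"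
  shows "q (t *\<^sub>R x) = t ^ m * q x"
  using assms by (rule formsE) (simp add: monomial_scaleR sum_distrib_left mult.left_commute)

lemma forms_eq_norm_power_mult_sgn:
  assumes "q \<in> forms m"
  shows "q x = norm x ^ m * q (sgn x)"
proof (cases "x = 0")
  case True
  then show ?thesis using forms_homogeneous[OF assms, of 0 0] by simp
next
  case False
  then show ?thesis using forms_homogeneous[OF assms, of "norm x" "sgn x"] by (simp add: sgn_div_norm)
qed

lemma forms_zero_at_origin: "q \<in> forms m \<Longrightarrow> m \<ge> 1 \<Longrightarrow> q 0 = 0"
  using forms_homogeneous[of q m 0 0] by (cases m) auto

lemma continuous_on_forms: "q \<in> forms m \<Longrightarrow> continuous_on UNIV q"
  by (erule formsE) (simp add: monomial_def continuous_intros)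

lemma borel_measurable_forms: "q \<in> forms m \<Longrightarrow> q \<in> borel_measurable borel"
  using continuous_on_forms borel_measurable_continuous_onI by blast

lemma forms_add:
  assumes "p \<in> forms m" "q \<in> forms m"
  shows "(\<lambda>x. p x + q x) \<in> forms m"
proof -
  obtain a where "p = (\<lambda>x. \<Sum>\<alpha>\<in>{\<alpha>. sum \<alpha> UNIV = m}. a \<alpha> * monomial \<alpha> x)"
    using assms(1) by (rule formsE)
  moreover obtain b where "q = (\<lambda>x. \<Sum>\<alpha>\<in>{\<alpha>. sum \<alpha> UNIV = m}. b \<alpha> * monomial \<alpha> x)"
    using assms(2) by (rule formsE)
  ultimately show ?thesis
    unfolding forms_def by (intro CollectI exI[of _ "\<lambda>\<alpha>. a \<alpha> + b \<alpha>"]) (simp add: sum.distrib distrib_right)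
qed

lemma forms_cmult:
  assumes "q \<in> forms m"
  shows "(\<lambda>x. a * q x) \<in> forms m"
proof -
  obtain b where "q = (\<lambda>x. \<Sum>\<alpha>\<in>{\<alpha>. sum \<alpha> UNIV = m}. b \<alpha> * monomial \<alpha> x)"
    using assms by (rule formsE)
  then show ?thesis
    unfolding forms_def by (intro CollectI exI[of _ "\<lambda>\<alpha>. a * b \<alpha>"]) (simp add: sum_distrib_left mult.assoc)
qed

lemma forms_diff:
  assumes "p \<in> forms m" "q \<in> forms m"
  shows "(\<lambda>x. p x - q x) \<in> forms m"
  using forms_add[OF assms(1) forms_cmult[OF assms(2), of "-1"]] by simp

lemma nn_integral_lborel_scaleR:
  fixes f :: "'a::euclidean_space \<Rightarrow> ennreal"
  assumes [measurable]: "f \<in> borel_measurable borel" and "t > 0"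
  shows "(\<integral>\<^sup>+x. f x \<partial>lborel) = ennreal (t ^ DIM('a)) * (\<integral>\<^sup>+x. f (t *\<^sub>R x) \<partial>lborel)"
  using \<open>t > 0\<close> by (subst lborel_affine[of t 0])
    (auto simp: nn_integral_density nn_integral_distr nn_integral_cmult)

lemma continuous_AE_lborel_eq_0:
  fixes f :: "'a::euclidean_space \<Rightarrow> real"
  assumes "continuous_on UNIV f" and "AE x in lborel. f x = 0"
  shows "f x = 0"
proof (rule ccontr)
  assume "f x \<noteq> 0"
  have "open {x. f x \<noteq> 0}"
    using assms(1) by (simp add: continuous_on_open_vimage open_Collect_neq continuous_on_const)
  then have "\<not> negligible {x. f x \<noteq> 0}"
    using \<open>f x \<noteq> 0\<close> open_not_negligible by blast
  moreover have "{x. f x \<noteq> 0} \<in> null_sets lborel"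
    using assms borel_measurable_continuous_onI[OF assms(1)] by (subst (asm) AE_iff_null) auto
  ultimately show False
    by (simp add: negligible_iff_null_sets null_sets_completionI)
qed

lemma tendsto_exp_neg_mult_at_top:
  fixes a :: real
  assumes "a > 0"
  shows "((\<lambda>l. exp (- (l * a))) \<longlongrightarrow> 0) at_top"
proof -
  have "filterlim (\<lambda>l. - (l * a)) at_bot at_top"
    using filterlim_tendsto_pos_mult_at_top[OF tendsto_const assms filterlim_ident]
    by (simp add: filterlim_uminus_at_bot mult.commute)
  then show ?thesis
    using exp_at_bot filterlim_compose by blast
qed

lemma nn_integral_exp_neg_atLeast:
  "(\<integral>\<^sup>+u. ennreal (exp (- u)) * indicator {a..} u \<partial>lborel) = ennreal (exp (- a))"
proof -
  have "(\<integral>\<^sup>+u. ennreal (exp (- u)) * indicator {a..} u \<partial>lborel) = ennreal (0 - (- exp (- a)))"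
    using tendsto_minus[OF tendsto_exp_neg_mult_at_top[of 1]]
    by (intro nn_integral_FTC_atLeast) (auto intro!: derivative_eq_intros)
  then show ?thesis by simp
qed

lemma nn_integral_exp_neg_mult_atLeast_1:
  fixes a b :: real
  assumes "a > 0" "b \<ge> 0"
  shows "(\<integral>\<^sup>+l. ennreal (b * a * exp (- (l * a))) * indicator {1..} l \<partial>lborel) = ennreal (b * exp (- a))"
proof -
  have "((\<lambda>l. - b * exp (- (l * a))) \<longlongrightarrow> 0) at_top"
    using tendsto_mult_right_zero[OF tendsto_exp_neg_mult_at_top[OF assms(1)], where c="- b"] by simp
  then have "(\<integral>\<^sup>+l. ennreal (b * a * exp (- (l * a))) * indicator {1..} l \<partial>lborel)
      = ennreal (0 - (- b * exp (- (1 * a))))"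
    using assms by (intro nn_integral_FTC_atLeast) (auto intro!: derivative_eq_intros)
  then show ?thesis by simp
qed

lemma nn_integral_powr_atLeast_1:
  fixes s :: real
  assumes "s > 0"
  shows "(\<integral>\<^sup>+l. ennreal (l powr (- (s + 1))) * indicator {1..} l \<partial>lborel) = ennreal (1 / s)"
proof -
  have "((\<lambda>l. - (l powr (- s)) / s) \<longlongrightarrow> 0) at_top"
    using tendsto_minus[OF tendsto_divide_zero[OF tendsto_neg_powr[OF _ filterlim_ident], of "- s" s]] assms
    by simp
  then have "(\<integral>\<^sup>+l. ennreal (l powr (- (s + 1))) * indicator {1..} l \<partial>lborel) = ennreal (0 - (- (1 powr (- s)) / s))"
    using assms by (intro nn_integral_FTC_atLeast)
      (auto intro!: derivative_eq_intros simp: powr_diff powr_minus field_simps powr_add)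
  then show ?thesis by simp
qed

lemma L2norm_squared: "(L2norm g f)\<^sup>2 = (\<integral>x. (f x)\<^sup>2 \<partial>mu g)"
  unfolding L2norm_def by (simp add: integral_nonneg_AE)

lemma (in finite_measure) measure_space_le_integral_square:
  fixes f :: "'a \<Rightarrow> real"
  assumes "integrable M f" "integrable M (\<lambda>x. (f x)\<^sup>2)" "(\<integral>x. f x \<partial>M) = measure M (space M)"
  shows "measure M (space M) \<le> (\<integral>x. (f x)\<^sup>2 \<partial>M)"
proof -
  have "0 \<le> (\<integral>x. (f x - 1)\<^sup>2 \<partial>M)"
    by (simp add: integral_nonneg_AE)
  also have "\<dots> = (\<integral>x. (f x)\<^sup>2 \<partial>M) - 2 * (\<integral>x. f x \<partial>M) + measure M (space M)"
    using assms(1,2) by (simp add: power2_diff)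
  finally show ?thesis
    using assms(3) by simp
qed

section \<open>Positive definite forms and the finiteness of \<open>\<mu>\<close>\<close>

locale positive_definite_form =
  fixes g :: "real^'d::finite \<Rightarrow> real" and n :: nat
  assumes n_ge_1: "n \<ge> 1"
    and form: "g \<in> forms (2*n)"
    and nonneg: "g x \<ge> 0"
    and eq_0_imp_origin: "g x = 0 \<Longrightarrow> x = 0"
begin

lemma borel_measurable_g [measurable]: "g \<in> borel_measurable borel"
  by (rule borel_measurable_forms[OF form])

lemma g_pos: "x \<noteq> 0 \<Longrightarrow> g x > 0"
  using nonneg[of x] eq_0_imp_origin[of x] by (metis order_le_neq_trans)

lemma g_homogeneous: "g (t *\<^sub>R x) = t ^ (2*n) * g x"
  by (rule forms_homogeneous[OF form])

lemma g_ge_norm_power: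
  obtains l where "l > 0" "\<And>x. l * norm x ^ (2*n) \<le> g x"
proof -
  have "sphere (0::real^'d) 1 \<noteq> {}"
    by simp
  then obtain u where u: "u \<in> sphere 0 1" "\<And>y. y \<in> sphere 0 1 \<Longrightarrow> g u \<le> g y"
    using continuous_attains_inf[OF compact_sphere _ continuous_on_subset[OF continuous_on_forms[OF form] subset_UNIV]]
    by blast
  have "g u > 0"
    using u(1) by (intro g_pos) auto
  moreover have "g u * norm x ^ (2*n) \<le> g x" for x
  proof (cases "x = 0")
    case False
    then have "g u \<le> g (sgn x)"
      by (intro u(2)) (simp add: norm_sgn)
    then have "g u * norm x ^ (2*n) \<le> g (sgn x) * norm x ^ (2*n)"
      by (intro mult_right_mono) auto
    also have "\<dots> = g x"
      using forms_eq_norm_power_mult_sgn[OF form, of x] by (simp only: mult.commute)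
    finally show ?thesis .
  qed (use n_ge_1 nonneg in \<open>simp add: power_0_left\<close>)
  ultimately show thesis using that by blast
qed

lemma forms_abs_le_g:
  assumes "q \<in> forms (2*n)"
  obtains K where "K \<ge> 0" "\<And>x. \<bar>q x\<bar> \<le> K * g x"
proof -
  obtain l where l: "l > 0" "\<And>x. l * norm x ^ (2*n) \<le> g x"
    using g_ge_norm_power by blast
  have "continuous_on (cball 0 1) (\<lambda>x. \<bar>q x\<bar>)"
    using continuous_on_subset[OF continuous_on_forms[OF assms] subset_UNIV] by (intro continuous_intros)
  then have "compact ((\<lambda>x. \<bar>q x\<bar>) ` cball 0 1)"
    by (intro compact_continuous_image) auto
  then have "bounded ((\<lambda>x. \<bar>q x\<bar>) ` cball 0 1)"
    by (rule compact_imp_bounded)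
  then obtain M where M: "M > 0" "\<And>y. y \<in> cball 0 1 \<Longrightarrow> \<bar>q y\<bar> \<le> M"
    unfolding bounded_pos by force
  have "\<bar>q x\<bar> \<le> M / l * g x" for x
  proof -
    have "\<bar>q x\<bar> = norm x ^ (2*n) * \<bar>q (sgn x)\<bar>"
      by (subst forms_eq_norm_power_mult_sgn[OF assms]) (simp add: abs_mult)
    also have "\<dots> \<le> norm x ^ (2*n) * M"
      using M(2)[of "sgn x"] by (intro mult_left_mono) (auto simp: norm_sgn)
    also have "\<dots> = M / l * (l * norm x ^ (2*n))"
      using l(1) by simp
    also have "\<dots> \<le> M / l * g x"
      using l M(1) by (intro mult_left_mono) auto
    finally show ?thesis .
  qed
  then show thesis
    using that[of "M / l"] M(1) l(1) by simp
qed

lemma bounded_sublevel_1: "bounded {x. g x \<le> 1}"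
proof -
  obtain l where l: "l > 0" "\<And>x. l * norm x ^ (2*n) \<le> g x"
    using g_ge_norm_power by blast
  have "norm x \<le> max 1 (1 / l)" if "g x \<le> 1" for x
  proof (cases "norm x \<le> 1")
    case False
    then have "norm x \<le> norm x ^ (2*n)"
      using n_ge_1 by (simp add: self_le_power)
    also have "\<dots> \<le> 1 / l"
      using l order_trans[OF l(2)[of x] that] by (simp add: field_simps)
    finally show ?thesis by simp
  qed simp
  then show ?thesis
    unfolding bounded_iff by blast
qed

lemma emeasure_sublevel:
  assumes "u > 0"
  shows "emeasure lborel {x. g x \<le> u}
    = ennreal (u powr (real CARD('d) / (2 * real n))) * emeasure lborel {x. g x \<le> 1}"
proof -
  define t where "t = u powr (1 / (2*n))"
  have t: "t > 0" "t ^ (2*n) = u" "t ^ CARD('d) = u powr (CARD('d) / (2*n))"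
    using assms n_ge_1 by (auto simp: t_def powr_realpow[symmetric] powr_powr)
  have "emeasure lborel {x. g x \<le> u} = (\<integral>\<^sup>+x. indicator {x. g x \<le> u} x \<partial>lborel)"
    by simp
  also have "\<dots> = ennreal (t ^ CARD('d)) * (\<integral>\<^sup>+x. indicator {x. g x \<le> u} (t *\<^sub>R x) \<partial>lborel)"
    using nn_integral_lborel_scaleR[OF _ t(1), where f="indicator {x. g x \<le> u}"] by simp
  also have "(\<lambda>x. indicator {x. g x \<le> u} (t *\<^sub>R x) :: ennreal) = indicator {x. g x \<le> 1}"
    using t assms by (auto simp: g_homogeneous indicator_def fun_eq_iff)
  finally show ?thesis
    using t by simp
qed

lemma nn_integral_exp_neg_mult_indicator_sublevel:
  assumes "u \<noteq> 0"
  shows "(\<integral>\<^sup>+x. ennreal (exp (- u)) * indicator {x. g x \<le> u} x \<partial>lborel)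
    = ennreal (indicator {0..} u * u powr (real CARD('d) / (2 * real n)) / exp u) * emeasure lborel {x. g x \<le> 1}"
proof (cases "u > 0")
  case True
  define s where "s = real CARD('d) / (2 * real n)"
  have "indicator {0..} u * u powr s / exp u = exp (- u) * u powr s"
    using True by (simp add: exp_minus divide_inverse mult.commute)
  have "(\<integral>\<^sup>+x. ennreal (exp (- u)) * indicator {x. g x \<le> u} x \<partial>lborel)
      = ennreal (exp (- u)) * (ennreal (u powr s) * emeasure lborel {x. g x \<le> 1})"
    using emeasure_sublevel[OF True] by (simp add: nn_integral_cmult_indicator s_def)
  also have "\<dots> = ennreal (indicator {0..} u * u powr s / exp u) * emeasure lborel {x. g x \<le> 1}"
    using \<open>indicator {0..} u * u powr s / exp u = exp (- u) * u powr s\<close>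
    by (simp add: ennreal_mult'[OF exp_ge_zero] mult.assoc)
  finally show ?thesis
    unfolding s_def .
next
  case False
  with assms have "u < 0"
    by simp
  then have "\<not> g x \<le> u" for x
    using nonneg[of x] by linarith
  then show ?thesis
    using \<open>u < 0\<close> by simp
qed

text \<open>Layer cake: \<open>\<integral> exp (- g) dx = \<integral>\<^sub>0\<^sup>\<infinity> exp (- u) |{g \<le> u}| du = \<Gamma>(d / (2 n) + 1) |{g \<le> 1}|\<close>.\<close>

lemma nn_integral_exp_neg_g_finite: "(\<integral>\<^sup>+x. ennreal (exp (- g x)) \<partial>lborel) < \<infinity>"
proof -
  define s where "s = real CARD('d) / (2 * real n)"
  define V where "V = emeasure lborel {x. g x \<le> 1}"
  have "s \<ge> 0"
    by (simp add: s_def)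
  have "V < \<infinity>"
    unfolding V_def using bounded_sublevel_1 by (rule emeasure_bounded_finite)
  have "(\<integral>\<^sup>+x. ennreal (exp (- g x)) \<partial>lborel)
      = (\<integral>\<^sup>+x. \<integral>\<^sup>+u. ennreal (exp (- u)) * indicator {x. g x \<le> u} x \<partial>lborel \<partial>lborel)"
    by (subst nn_integral_exp_neg_atLeast[symmetric])
      (auto intro!: nn_integral_cong simp: indicator_def)
  also have "\<dots> = (\<integral>\<^sup>+u. \<integral>\<^sup>+x. ennreal (exp (- u)) * indicator {x. g x \<le> u} x \<partial>lborel \<partial>lborel)"
    by (rule lborel_pair.Fubini'[symmetric,
          where f="\<lambda>x u. ennreal (exp (- u)) * indicator {x. g x \<le> u} x", simplified]) measurable
  also have "\<dots> = (\<integral>\<^sup>+u. ennreal (indicator {0..} u * u powr s / exp u) * V \<partial>lborel)"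
    unfolding s_def V_def
    by (intro nn_integral_cong_AE eventually_mono[OF AE_lborel_singleton[of 0]]
        nn_integral_exp_neg_mult_indicator_sublevel)
  also have "\<dots> = (\<integral>\<^sup>+u. ennreal (indicator {0..} u * u powr s / exp u) \<partial>lborel) * V"
    by (rule nn_integral_multc) measurable
  also have "\<dots> = ennreal (Gamma (s + 1)) * V"
    using Gamma_conv_nn_integral_real[of "s + 1"] \<open>s \<ge> 0\<close> by simp
  also have "\<dots> < \<infinity>"
    using \<open>V < \<infinity>\<close> by (simp add: ennreal_mult_less_top)
  finally show ?thesis .
qed

lemma sets_mu [measurable_cong, simp]: "sets (mu g) = sets borel"
  by (simp add: mu_def)

lemma space_mu [simp]: "space (mu g) = UNIV"
  by (simp add: mu_def)

lemma nn_integral_mu: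
  assumes [measurable]: "f \<in> borel_measurable borel"
  shows "(\<integral>\<^sup>+x. ennreal (f x) \<partial>mu g) = (\<integral>\<^sup>+x. ennreal (f x * exp (- g x)) \<partial>lborel)"
  unfolding mu_def by (simp add: nn_integral_density ennreal_mult'' mult.commute)

lemma finite_measure_mu: "finite_measure (mu g)"
proof (rule finite_measureI)
  have "emeasure (mu g) (space (mu g)) = (\<integral>\<^sup>+x. ennreal (exp (- g x)) \<partial>lborel)"
    by (simp add: mu_def emeasure_density)
  then show "emeasure (mu g) (space (mu g)) \<noteq> \<infinity>"
    using nn_integral_exp_neg_g_finite by simp
qed

sublocale mu: finite_measure "mu g"
  by (rule finite_measure_mu)

section \<open>The moment identity\<close>

lemma nn_integral_moment_dilated:
  assumes [measurable]: "F \<in> borel_measurable borel" and F_nonneg: "\<And>x. F x \<ge> 0"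
    and F_homogeneous: "\<And>t x. t > 0 \<Longrightarrow> F (t *\<^sub>R x) = t ^ m * F x"
    and "l > 0"
  shows "(\<integral>\<^sup>+x. ennreal (F x * g x * exp (- (l * g x))) \<partial>lborel)
    = ennreal (l powr (- ((real CARD('d) + real m) / (2 * real n) + 1))) * (\<integral>\<^sup>+x. ennreal (F x * g x * exp (- g x)) \<partial>lborel)"
proof -
  define t where "t = l powr (- 1 / (2*n))"
  have t: "t > 0" "l * t ^ (2*n) = 1" "t ^ (CARD('d) + m + 2*n) = l powr (- ((real CARD('d) + real m) / (2 * real n) + 1))"
    using \<open>l > 0\<close> n_ge_1 by (auto simp: t_def powr_realpow[symmetric] powr_powr powr_add[symmetric] field_simps)
  have "(\<integral>\<^sup>+x. ennreal (F x * g x * exp (- (l * g x))) \<partial>lborel)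
      = ennreal (t ^ CARD('d)) * (\<integral>\<^sup>+x. ennreal (F (t *\<^sub>R x) * g (t *\<^sub>R x) * exp (- (l * g (t *\<^sub>R x)))) \<partial>lborel)"
    using nn_integral_lborel_scaleR[OF _ t(1), where f="\<lambda>x. ennreal (F x * g x * exp (- (l * g x)))"] by simp
  also have "(\<lambda>x. ennreal (F (t *\<^sub>R x) * g (t *\<^sub>R x) * exp (- (l * g (t *\<^sub>R x)))))
      = (\<lambda>x. ennreal (t ^ (m + 2*n)) * ennreal (F x * g x * exp (- g x)))"
    using t F_nonneg nonneg
    by (auto simp: F_homogeneous g_homogeneous power_add ennreal_mult[symmetric] mult_ac)
  also have "ennreal (t ^ CARD('d)) * (\<integral>\<^sup>+x. ennreal (t ^ (m + 2*n)) * ennreal (F x * g x * exp (- g x)) \<partial>lborel)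
      = ennreal (t ^ (CARD('d) + m + 2*n)) * (\<integral>\<^sup>+x. ennreal (F x * g x * exp (- g x)) \<partial>lborel)"
    using t(1) by (simp add: nn_integral_cmult ennreal_mult power_add mult.assoc)
  finally show ?thesis
    unfolding t(3) .
qed

lemma nn_integral_moment:
  assumes [measurable]: "F \<in> borel_measurable borel" and F_nonneg: "\<And>x. F x \<ge> 0"
    and F_homogeneous: "\<And>t x. t > 0 \<Longrightarrow> F (t *\<^sub>R x) = t ^ m * F x"
  shows "(\<integral>\<^sup>+x. ennreal (F x * g x) \<partial>mu g)
    = ennreal ((real CARD('d) + real m) / (2 * real n)) * (\<integral>\<^sup>+x. ennreal (F x) \<partial>mu g)"
proof -
  define s where "s = (real CARD('d) + real m) / (2 * real n)"
  have "s > 0"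
    using n_ge_1 by (simp add: s_def add_pos_nonneg)
  define J where "J = (\<integral>\<^sup>+x. ennreal (F x * g x * exp (- g x)) \<partial>lborel)"
  have "(\<integral>\<^sup>+x. ennreal (F x * exp (- g x)) \<partial>lborel)
      = (\<integral>\<^sup>+x. \<integral>\<^sup>+l. ennreal (F x * g x * exp (- (l * g x))) * indicator {1..} l \<partial>lborel \<partial>lborel)"
  proof (intro nn_integral_cong_AE eventually_mono[OF AE_lborel_singleton[of 0]])
    fix x :: "real^'d"
    assume "x \<noteq> 0"
    then show "ennreal (F x * exp (- g x))
        = (\<integral>\<^sup>+l. ennreal (F x * g x * exp (- (l * g x))) * indicator {1..} l \<partial>lborel)"
      using nn_integral_exp_neg_mult_atLeast_1[OF g_pos F_nonneg[of x]] by (simp add: mult.assoc)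
  qed
  also have "\<dots> = (\<integral>\<^sup>+l. \<integral>\<^sup>+x. ennreal (F x * g x * exp (- (l * g x))) * indicator {1..} l \<partial>lborel \<partial>lborel)"
    by (rule lborel_pair.Fubini'[symmetric,
          where f="\<lambda>x l. ennreal (F x * g x * exp (- (l * g x))) * indicator {1..} l", simplified])
      measurable
  also have "\<dots> = (\<integral>\<^sup>+l. ennreal (l powr (- (s + 1))) * indicator {1..} l * J \<partial>lborel)"
    using nn_integral_moment_dilated[OF assms]
    by (intro nn_integral_cong) (auto simp: nn_integral_multc J_def s_def indicator_def)
  also have "\<dots> = ennreal (1 / s) * J"
    using nn_integral_powr_atLeast_1[OF \<open>s > 0\<close>] by (simp add: nn_integral_multc)
  finally have "ennreal s * (\<integral>\<^sup>+x. ennreal (F x * exp (- g x)) \<partial>lborel) = (ennreal s * ennreal (1 / s)) * J"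
    by (simp add: mult.assoc)
  moreover have "ennreal s * ennreal (1 / s) = 1"
    using \<open>s > 0\<close> by (simp flip: ennreal_mult)
  ultimately have "ennreal s * (\<integral>\<^sup>+x. ennreal (F x * exp (- g x)) \<partial>lborel) = J"
    by (simp only: mult_1)
  moreover have "(\<integral>\<^sup>+x. ennreal (F x * g x) \<partial>mu g) = J"
    unfolding J_def by (subst nn_integral_mu) (simp_all add: mult.assoc)
  ultimately show ?thesis
    by (simp add: nn_integral_mu s_def)
qed

lemma integral_moment:
  assumes [measurable]: "F \<in> borel_measurable borel" and F_nonneg: "\<And>x. F x \<ge> 0"
    and F_homogeneous: "\<And>t x. t > 0 \<Longrightarrow> F (t *\<^sub>R x) = t ^ m * F x"
    and F_integrable: "integrable (mu g) F"
  shows "integrable (mu g) (\<lambda>x. F x * g x)"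
    and "(\<integral>x. F x * g x \<partial>mu g) = (real CARD('d) + real m) / (2 * real n) * (\<integral>x. F x \<partial>mu g)"
proof -
  define k where "k = (real CARD('d) + real m) / (2 * real n)"
  have k_nonneg: "k \<ge> 0" and integral_nonneg: "(\<integral>x. F x \<partial>mu g) \<ge> 0"
    using F_nonneg by (simp_all add: k_def integral_nonneg_AE)
  have "(\<integral>\<^sup>+x. ennreal (F x) \<partial>mu g) = ennreal (\<integral>x. F x \<partial>mu g)"
    using F_integrable F_nonneg by (intro nn_integral_eq_integral) auto
  then have moment: "(\<integral>\<^sup>+x. ennreal (F x * g x) \<partial>mu g) = ennreal (k * (\<integral>x. F x \<partial>mu g))"
    using nn_integral_moment[OF assms(1-3)]
    by (simp only: k_def[symmetric] ennreal_mult[OF k_nonneg integral_nonneg])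
  show integrable: "integrable (mu g) (\<lambda>x. F x * g x)"
    using moment F_nonneg nonneg by (intro integrableI_nonneg) auto
  have "(\<integral>\<^sup>+x. ennreal (F x * g x) \<partial>mu g) = ennreal (\<integral>x. F x * g x \<partial>mu g)"
    using integrable F_nonneg nonneg by (intro nn_integral_eq_integral) auto
  with moment have "(\<integral>x. F x * g x \<partial>mu g) = k * (\<integral>x. F x \<partial>mu g)"
    using F_nonneg nonneg k_nonneg integral_nonneg by (simp add: integral_nonneg_AE)
  then show "(\<integral>x. F x * g x \<partial>mu g) = (real CARD('d) + real m) / (2 * real n) * (\<integral>x. F x \<partial>mu g)"
    by (simp only: k_def)
qed

lemma integrable_g: "integrable (mu g) g"
  using integral_moment(1)[of "\<lambda>_. 1" 0] by simp

lemma integrable_g_mult_g: "integrable (mu g) (\<lambda>x. g x * g x)"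
  using integral_moment(1)[OF borel_measurable_g nonneg g_homogeneous integrable_g] .

lemma integrable_forms:
  assumes "q \<in> forms (2*n)"
  shows "integrable (mu g) q"
proof -
  obtain K where "K \<ge> 0" "\<And>x. \<bar>q x\<bar> \<le> K * g x"
    using forms_abs_le_g[OF assms] by blast
  then show ?thesis
    using borel_measurable_forms[OF assms] nonneg
    by (intro Bochner_Integration.integrable_bound[OF integrable_mult_right[OF integrable_g, of K]]) auto
qed

lemma integrable_forms_mult:
  assumes "p \<in> forms (2*n)" "q \<in> forms (2*n)"
  shows "integrable (mu g) (\<lambda>x. p x * q x)"
proof -
  obtain K where K: "K \<ge> 0" "\<And>x. \<bar>p x\<bar> \<le> K * g x"
    using forms_abs_le_g[OF assms(1)] by blast
  obtain L where L: "L \<ge> 0" "\<And>x. \<bar>q x\<bar> \<le> L * g x"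
    using forms_abs_le_g[OF assms(2)] by blast
  have "\<bar>p x * q x\<bar> \<le> K * L * (g x * g x)" for x
    using mult_mono[OF K(2) L(2)] K(1) nonneg by (simp add: abs_mult mult_ac)
  then show ?thesis
    using borel_measurable_forms[OF assms(1)] borel_measurable_forms[OF assms(2)] K(1) L(1) nonneg
    by (intro Bochner_Integration.integrable_bound[OF integrable_mult_right[OF integrable_g_mult_g, of "K * L"]])
      auto
qed

lemma integrable_affine_forms_mult:
  assumes "p \<in> forms (2*n)" "q \<in> forms (2*n)"
  shows "integrable (mu g) (\<lambda>x. (p x + a) * (q x + b))"
proof -
  have "integrable (mu g) (\<lambda>x. p x * q x + b * p x + a * q x + a * b)"
    using integrable_forms_mult[OF assms] integrable_forms[OF assms(1)] integrable_forms[OF assms(2)]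
    by simp
  moreover have "(\<lambda>x. p x * q x + b * p x + a * q x + a * b) = (\<lambda>x. (p x + a) * (q x + b))"
    by (simp add: fun_eq_iff algebra_simps)
  ultimately show ?thesis
    by simp
qed

lemma integral_forms_mult_g:
  assumes "r \<in> forms (2*n)"
  shows "(\<integral>x. r x * g x \<partial>mu g) = (1 + real CARD('d) / (2 * real n)) * (\<integral>x. r x \<partial>mu g)"
proof -
  define c :: real where "c = 1 + real CARD('d) / (2 * real n)"
  obtain K where K: "K \<ge> 0" "\<And>x. \<bar>r x\<bar> \<le> K * g x"
    using forms_abs_le_g[OF assms] by blast
  define p where "p = (\<lambda>x. r x + K * g x)"
  have p: "p \<in> forms (2*n)"
    unfolding p_def by (intro forms_add assms forms_cmult form)
  have "p x \<ge> 0" for x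
    using K(2)[of x] by (simp add: p_def)
  have "(real CARD('d) + real (2*n)) / (2 * real n) = c"
    using n_ge_1 by (simp add: c_def field_simps)
  then have "(\<integral>x. p x * g x \<partial>mu g) = c * (\<integral>x. p x \<partial>mu g)"
    and "(\<integral>x. g x * g x \<partial>mu g) = c * (\<integral>x. g x \<partial>mu g)"
    using integral_moment(2)[OF borel_measurable_forms[OF p] \<open>\<And>x. p x \<ge> 0\<close> forms_homogeneous[OF p]
        integrable_forms[OF p]]
      integral_moment(2)[OF borel_measurable_g nonneg g_homogeneous integrable_g]
    by simp_all
  moreover have "(\<integral>x. p x * g x \<partial>mu g) = (\<integral>x. r x * g x \<partial>mu g) + K * (\<integral>x. g x * g x \<partial>mu g)"
    and "(\<integral>x. p x \<partial>mu g) = (\<integral>x. r x \<partial>mu g) + K * (\<integral>x. g x \<partial>mu g)"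
    using integrable_forms_mult[OF assms form] integrable_g_mult_g integrable_forms[OF assms] integrable_g
    by (simp_all add: p_def distrib_right mult.assoc)
  ultimately show ?thesis
    by (simp add: c_def algebra_simps)
qed

section \<open>Least squares approximation of \<open>1\<close> by forms\<close>

definition q_star :: "real^'d \<Rightarrow> real" where
  "q_star x = g x / (1 + real CARD('d) / (2 * real n))"

lemma q_star_in_forms: "q_star \<in> forms (2*n)"
  using forms_cmult[OF form, of "1 / (1 + real CARD('d) / (2 * real n))"]
  by (simp add: q_star_def[abs_def])

lemma integral_forms_mult_q_star_minus_1:
  assumes "r \<in> forms (2*n)"
  shows "(\<integral>x. r x * (q_star x - 1) \<partial>mu g) = 0"
proof -
  define c :: real where "c = 1 + real CARD('d) / (2 * real n)"
  have "c > 0"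
    unfolding c_def by (intro add_pos_nonneg) auto
  have "(\<lambda>x. r x * (q_star x - 1)) = (\<lambda>x. r x * g x / c - r x)"
    by (simp add: fun_eq_iff q_star_def c_def right_diff_distrib)
  then have "(\<integral>x. r x * (q_star x - 1) \<partial>mu g) = (\<integral>x. r x * g x \<partial>mu g) / c - (\<integral>x. r x \<partial>mu g)"
    using integrable_forms_mult[OF assms form] integrable_forms[OF assms] by simp
  also have "\<dots> = 0"
    using integral_forms_mult_g[OF assms] \<open>c > 0\<close> by (simp add: c_def[symmetric])
  finally show ?thesis .
qed

lemma L2_distance_to_1_decomposition:
  assumes "p \<in> forms (2*n)"
  shows "(L2norm g (\<lambda>x. p x - 1))\<^sup>2 = (\<integral>x. (p x - q_star x)\<^sup>2 \<partial>mu g) + (L2norm g (\<lambda>x. q_star x - 1))\<^sup>2"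
proof -
  define r where "r = (\<lambda>x. p x - q_star x)"
  have r: "r \<in> forms (2*n)"
    unfolding r_def by (intro forms_diff assms q_star_in_forms)
  have "(\<lambda>x. (p x - 1)\<^sup>2) = (\<lambda>x. (r x)\<^sup>2 + 2 * (r x * (q_star x - 1)) + (q_star x - 1)\<^sup>2)"
    by (simp add: fun_eq_iff r_def power2_eq_square algebra_simps)
  moreover have "integrable (mu g) (\<lambda>x. (r x)\<^sup>2)" "integrable (mu g) (\<lambda>x. r x * (q_star x - 1))"
    "integrable (mu g) (\<lambda>x. (q_star x - 1)\<^sup>2)"
    using integrable_affine_forms_mult[OF r r, of 0 0] integrable_affine_forms_mult[OF r q_star_in_forms, of 0 "-1"]
      integrable_affine_forms_mult[OF q_star_in_forms q_star_in_forms, of "-1" "-1"]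
    by (simp_all add: power2_eq_square)
  ultimately show ?thesis
    using integral_forms_mult_q_star_minus_1[OF r] by (simp add: L2norm_squared r_def)
qed

lemma continuous_eq_0_if_integral_square_eq_0:
  fixes f :: "real^'d \<Rightarrow> real"
  assumes "continuous_on UNIV f" "integrable (mu g) (\<lambda>x. (f x)\<^sup>2)" "(\<integral>x. (f x)\<^sup>2 \<partial>mu g) = 0"
  shows "f x = 0"
proof -
  have "AE x in mu g. (f x)\<^sup>2 = 0"
    using integral_nonneg_eq_0_iff_AE[OF assms(2)] assms(3) by simp
  then have "AE x in lborel. f x = 0"
    unfolding mu_def by (subst (asm) AE_density) auto
  then show ?thesis
    by (rule continuous_AE_lborel_eq_0[OF assms(1)])
qed

lemma L2_distance_to_1_minimizer_iff:
  "q \<in> forms (2*n) \<and> (\<forall>p\<in>forms (2*n). (L2norm g (\<lambda>x. q x - 1))\<^sup>2 \<le> (L2norm g (\<lambda>x. p x - 1))\<^sup>2)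
    \<longleftrightarrow> q = q_star"
proof
  assume q: "q \<in> forms (2*n) \<and> (\<forall>p\<in>forms (2*n). (L2norm g (\<lambda>x. q x - 1))\<^sup>2 \<le> (L2norm g (\<lambda>x. p x - 1))\<^sup>2)"
  then have r: "(\<lambda>x. q x - q_star x) \<in> forms (2*n)"
    by (intro forms_diff q_star_in_forms) simp
  have "(\<integral>x. (q x - q_star x)\<^sup>2 \<partial>mu g) \<le> 0"
    using q q_star_in_forms L2_distance_to_1_decomposition[of q] by force
  then have eq_0: "(\<integral>x. (q x - q_star x)\<^sup>2 \<partial>mu g) = 0"
    by (intro antisym integral_nonneg_AE) auto
  have "integrable (mu g) (\<lambda>x. (q x - q_star x)\<^sup>2)"
    using integrable_affine_forms_mult[OF r r, of 0 0] by (simp add: power2_eq_square)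
  from continuous_eq_0_if_integral_square_eq_0[OF continuous_on_forms[OF r] this eq_0]
  have "q x - q_star x = 0" for x .
  then show "q = q_star"
    by auto
next
  have "(L2norm g (\<lambda>x. q_star x - 1))\<^sup>2 \<le> (L2norm g (\<lambda>x. p x - 1))\<^sup>2" if "p \<in> forms (2*n)" for p
    using L2_distance_to_1_decomposition[OF that] integral_nonneg_AE[of "\<lambda>x. (p x - q_star x)\<^sup>2" "mu g"]
    by simp
  then show "q \<in> forms (2*n) \<and> (\<forall>p\<in>forms (2*n). (L2norm g (\<lambda>x. q x - 1))\<^sup>2 \<le> (L2norm g (\<lambda>x. p x - 1))\<^sup>2)"
    if "q = q_star"
    using q_star_in_forms that by simp
qed

section \<open>Comparison of the \<open>L\<^sup>1\<close> and \<open>L\<^sup>2\<close> norms\<close>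

lemma integral_degree_0_mult_g:
  assumes [measurable]: "H \<in> borel_measurable borel" and H_nonneg: "\<And>x. 0 \<le> H x"
    and H_bounded: "\<And>x. H x \<le> B" and H_homogeneous: "\<And>t x. t > 0 \<Longrightarrow> H (t *\<^sub>R x) = H x"
  shows "(\<integral>x. H x * g x \<partial>mu g) = real CARD('d) / (2 * real n) * (\<integral>x. H x \<partial>mu g)"
    and "(\<integral>x. (H x * g x)\<^sup>2 \<partial>mu g)
      = (1 + real CARD('d) / (2 * real n)) * (real CARD('d) / (2 * real n)) * (\<integral>x. (H x)\<^sup>2 \<partial>mu g)"
proof -
  have H_integrable: "integrable (mu g) H"
    using H_nonneg H_bounded by (intro mu.integrable_const_bound[where B=B]) auto
  have H2_integrable: "integrable (mu g) (\<lambda>x. (H x)\<^sup>2)"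
    using H_nonneg H_bounded by (intro mu.integrable_const_bound[where B="B\<^sup>2"]) (auto intro: power_mono)
  show "(\<integral>x. H x * g x \<partial>mu g) = real CARD('d) / (2 * real n) * (\<integral>x. H x \<partial>mu g)"
    using integral_moment(2)[of H 0] H_nonneg H_homogeneous H_integrable by simp
  have "integrable (mu g) (\<lambda>x. (H x)\<^sup>2 * g x)"
    and H2g: "(\<integral>x. (H x)\<^sup>2 * g x \<partial>mu g) = real CARD('d) / (2 * real n) * (\<integral>x. (H x)\<^sup>2 \<partial>mu g)"
    using integral_moment[of "\<lambda>x. (H x)\<^sup>2" 0] H_homogeneous H2_integrable by simp_all
  then have H2gg: "(\<integral>x. (H x)\<^sup>2 * g x * g x \<partial>mu g)
      = (real CARD('d) + real (2*n)) / (2 * real n) * (\<integral>x. (H x)\<^sup>2 * g x \<partial>mu g)"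
    using integral_moment(2)[of "\<lambda>x. (H x)\<^sup>2 * g x" "2*n"] nonneg H_homogeneous
    by (simp add: g_homogeneous power_mult_distrib)
  have "(\<integral>x. (H x * g x)\<^sup>2 \<partial>mu g) = (\<integral>x. (H x)\<^sup>2 * g x * g x \<partial>mu g)"
    by (simp add: power2_eq_square mult_ac)
  also have "\<dots> = (1 + real CARD('d) / (2 * real n)) * (\<integral>x. (H x)\<^sup>2 * g x \<partial>mu g)"
    using H2gg n_ge_1 by (simp add: field_simps)
  finally show "(\<integral>x. (H x * g x)\<^sup>2 \<partial>mu g)
      = (1 + real CARD('d) / (2 * real n)) * (real CARD('d) / (2 * real n)) * (\<integral>x. (H x)\<^sup>2 \<partial>mu g)"
    by (simp only: H2g mult.assoc)
qed

lemma L2norm_g_le_if_L1norm_eq: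
  assumes q: "q \<in> forms (2*n)" and L1_eq: "L1norm g q = L1norm g g"
  shows "L2norm g g \<le> L2norm g q"
proof -
  define s :: real where "s = real CARD('d) / (2 * real n)"
  define c :: real where "c = 1 + real CARD('d) / (2 * real n)"
  have "s > 0" "c > 0"
    using n_ge_1 by (simp_all add: s_def c_def add_pos_nonneg)
  obtain K where K: "K \<ge> 0" "\<And>x. \<bar>q x\<bar> \<le> K * g x"
    using forms_abs_le_g[OF q] by blast
  define H where "H x = \<bar>q x\<bar> / g x" for x
  have [measurable]: "H \<in> borel_measurable borel"
    using borel_measurable_forms[OF q] unfolding H_def by measurable
  have H_nonneg: "0 \<le> H x" and H_bounded: "H x \<le> K" for x
    using nonneg[of x] K(2)[of x] K(1) by (auto simp: H_def divide_le_eq)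
  have H_homogeneous: "H (t *\<^sub>R x) = H x" if "t > 0" for t x
    using that by (simp add: H_def forms_homogeneous[OF q] g_homogeneous abs_mult)
  have abs_q: "\<bar>q x\<bar> = H x * g x" for x
    using forms_zero_at_origin[OF q] n_ge_1 g_pos[of x] by (cases "x = 0") (auto simp: H_def)
  note H_moments = integral_degree_0_mult_g[OF _ H_nonneg H_bounded H_homogeneous, folded s_def c_def]
  note one_moments = integral_degree_0_mult_g[of "\<lambda>_. 1" 1, folded s_def c_def]
  have "L1norm g q = s * (\<integral>x. H x \<partial>mu g)" and "L1norm g g = s * measure (mu g) UNIV"
    using H_moments(1) one_moments(1) nonneg by (simp_all add: L1norm_def abs_q)
  with L1_eq \<open>s > 0\<close> have "(\<integral>x. H x \<partial>mu g) = measure (mu g) (space (mu g))"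
    by simp
  then have "measure (mu g) (space (mu g)) \<le> (\<integral>x. (H x)\<^sup>2 \<partial>mu g)"
    using H_nonneg H_bounded
    by (intro mu.measure_space_le_integral_square mu.integrable_const_bound[where B=K]
        mu.integrable_const_bound[where B="K\<^sup>2"]) (auto intro: power_mono)
  moreover have "(L2norm g q)\<^sup>2 = c * s * (\<integral>x. (H x)\<^sup>2 \<partial>mu g)"
    using H_moments(2) by (simp add: L2norm_squared flip: abs_q)
  moreover have "(L2norm g g)\<^sup>2 = c * s * measure (mu g) (space (mu g))"
    using one_moments(2) by (simp add: L2norm_squared)
  ultimately have "(L2norm g g)\<^sup>2 \<le> (L2norm g q)\<^sup>2"
    using \<open>s > 0\<close> \<open>c > 0\<close> by simp
  then show ?thesis
    by (rule power2_le_imp_le) (simp add: L2norm_def)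
qed

end

theorem corollary2p4:
  fixes g :: "real^'d::finite \<Rightarrow> real" and n :: nat
  assumes "n \<ge> 1"
    and "g \<in> forms (2*n)"
    and "\<And>x. g x \<ge> 0"
    and "\<And>x. g x = 0 \<Longrightarrow> x = 0"
  defines "c \<equiv> 1 + real CARD('d) / (2 * real n)"
  shows "(\<exists>!q. q \<in> forms (2*n) \<and>
              (\<forall>p\<in>forms (2*n). (L2norm g (\<lambda>x. q x - 1))\<^sup>2 \<le> (L2norm g (\<lambda>x. p x - 1))\<^sup>2))
       \<and> (\<forall>q. q \<in> forms (2*n) \<and>
              (\<forall>p\<in>forms (2*n). (L2norm g (\<lambda>x. q x - 1))\<^sup>2 \<le> (L2norm g (\<lambda>x. p x - 1))\<^sup>2)
            \<longrightarrow> g = (\<lambda>x. c * q x))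
       \<and> (\<forall>q\<in>forms (2*n). L1norm g q = L1norm g g \<longrightarrow> L2norm g g \<le> L2norm g q)"
proof -
  interpret positive_definite_form g n
    using assms(1-4) by unfold_locales auto
  have "c > 0"
    unfolding c_def by (intro add_pos_nonneg) auto
  then have "g = (\<lambda>x. c * q_star x)"
    by (simp add: fun_eq_iff q_star_def c_def)
  then show ?thesis
    using L2_distance_to_1_minimizer_iff L2norm_g_le_if_L1norm_eq by auto
qed

end
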